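(* Let $X$ and $\tilde X$ be entrywise nonnegative real symmetric matrices such that $I\succeq X$, $I\succeq\tilde X$, and $I-\tilde X\approx_\epsilon I-\tfrac12X-\tfrac12X^2$. If $\rho(X)\le 1-\lambda$, then all eigenvalues of $\tilde X$ lie between $1-\tfrac12(3-\lambda)e^{\epsilon}$ and $1-\tfrac12(3\lambda-\lambda^2)e^{-\epsilon}$.
   Context: $\rho$ denotes spectral radius; $\succeq$ is the Loewner order; $A\approx_\epsilon B$ means $e^{\epsilon}A\succeq B\succeq e^{-\epsilon}A$. *)

theory Defs
  imports "HOL-Analysis.Analysis"
begin

definition loewner_ge :: "real^'n^'n \<Rightarrow> real^'n^'n \<Rightarrow> bool" where
  "loewner_ge A B \<longleftrightarrow> (\<forall>x::real^'n. 0 \<le> x \<bullet> ((A - B) *v x))"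

definition spectral_approx :: "real \<Rightarrow> real^'n^'n \<Rightarrow> real^'n^'n \<Rightarrow> bool" where
  "spectral_approx eps A B \<longleftrightarrow> loewner_ge (exp eps *\<^sub>R A) B \<and> loewner_ge B (exp (- eps) *\<^sub>R A)"

definition cspec :: "real^'n^'n \<Rightarrow> complex set" where
  "cspec X = {\<mu>. \<exists>v::complex^'n. v \<noteq> 0 \<and>
      (\<chi> i j. complex_of_real (X $ i $ j)) *v v = \<mu> *s v}"

definition spec_rad :: "real^'n^'n \<Rightarrow> real" where
  "spec_rad X = Sup (cmod ` cspec X)"

definition nonneg_mat :: "real^'n^'n \<Rightarrow> bool" where
  "nonneg_mat X \<longleftrightarrow> (\<forall>i j. 0 \<le> X $ i $ j)"

definition symmetric_mat :: "real^'n^'n \<Rightarrow> bool" where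
  "symmetric_mat X \<longleftrightarrow> transpose X = X"

end

theory Submission
  imports Defs
begin

text \<open>Eigenvalues of the symmetric matrix \<open>X\<close> are real, so \<open>\<rho>(X) \<le> r\<close> bounds the operator norm of
  \<open>X\<close> by \<open>r\<close>: a unit vector maximising \<open>|Xu|\<^sup>2\<close> is an eigenvector of \<open>X\<^sup>2\<close>, from which an eigenvector of
  \<open>X\<close> with eigenvalue of the same modulus is built. Hence for every \<open>u\<close> the Rayleigh quotient of
  \<open>I - X/2 - X\<^sup>2/2\<close> lies between \<open>1 - r/2 - r\<^sup>2/2\<close> and \<open>1 + r/2\<close>. An eigenvector of \<open>X\<^sub>t\<close> (again real)
  turns the spectral approximation into a comparison of these Rayleigh quotients with \<open>1 - \<mu>\<close>.\<close>

lemma symmetric_mat_inner: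
  fixes X :: "real^'n^'n"
  assumes "symmetric_mat X"
  shows "x \<bullet> (X *v y) = (X *v x) \<bullet> y"
  by (metis assms dot_lmul_matrix symmetric_mat_def transpose_matrix_vector)

lemma transpose_diff: "transpose (A - B) = transpose A - transpose (B::'a::ab_group_add^'n^'m)"
  by (simp add: transpose_def vec_eq_iff)

lemma loewner_ge_quadratic_form:
  fixes P Q :: "real^'n^'n"
  assumes "loewner_ge P Q"
  shows "u \<bullet> (Q *v u) \<le> u \<bullet> (P *v u)"
  using assms unfolding loewner_ge_def
  by (metis diff_ge_0_iff_ge inner_diff_right matrix_vector_mult_diff_rdistrib)

lemma quadratic_form_scaleR:
  fixes A :: "real^'n^'n"
  shows "u \<bullet> ((c *\<^sub>R A) *v u) = c * (u \<bullet> (A *v u))"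
  by (simp add: scaleR_matrix_vector_assoc[symmetric])

lemma linear_coeff_zero_if_quadratic_nonneg:
  fixes a b :: real
  assumes "\<And>t. 0 \<le> a * t\<^sup>2 + 2 * b * t"
  shows "b = 0"
proof (rule ccontr)
  assume "b \<noteq> 0"
  have "a \<ge> 0"
    using assms[of 1] assms[of "-1"] by simp
  define s where "s = 1 / (a + 1)"
  have "s > 0" and "a * s = 1 - s"
    using \<open>a \<ge> 0\<close> by (auto simp: s_def field_simps)
  have "0 \<le> a * (- b * s)\<^sup>2 + 2 * b * (- b * s)"
    by (rule assms)
  also have "\<dots> = (b\<^sup>2 * s) * (a * s - 2)"
    by (simp add: power2_eq_square algebra_simps)
  also have "\<dots> = - (b\<^sup>2 * s) * (1 + s)"
    unfolding \<open>a * s = 1 - s\<close> by (simp add: algebra_simps)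
  also have "\<dots> < 0"
    using \<open>b \<noteq> 0\<close> \<open>s > 0\<close> by (simp add: mult_pos_pos)
  finally show False by simp
qed

lemma psd_quadratic_form_zero_imp_null:
  fixes P :: "real^'n^'n"
  assumes sym: "symmetric_mat P" and psd: "\<And>x. 0 \<le> x \<bullet> (P *v x)"
    and null: "u \<bullet> (P *v u) = 0"
  shows "P *v u = 0"
proof -
  have "y \<bullet> (P *v u) = 0" for y
  proof (rule linear_coeff_zero_if_quadratic_nonneg)
    fix t :: real
    have "(u + t *\<^sub>R y) \<bullet> (P *v (u + t *\<^sub>R y))
        = u \<bullet> (P *v u) + t * (u \<bullet> (P *v y)) + t * (y \<bullet> (P *v u)) + t\<^sup>2 * (y \<bullet> (P *v y))"
      by (simp add: matrix_vector_right_distrib matrix_vector_mult_scaleR inner_add_left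
          inner_add_right power2_eq_square distrib_left)
    moreover have "u \<bullet> (P *v y) = y \<bullet> (P *v u)"
      using symmetric_mat_inner[OF sym, of u y] by (simp add: inner_commute)
    ultimately show "0 \<le> (y \<bullet> (P *v y)) * t\<^sup>2 + 2 * (y \<bullet> (P *v u)) * t"
      using psd[of "u + t *\<^sub>R y"] null by (simp add: algebra_simps power2_eq_square)
  qed
  from this[of "P *v u"] show ?thesis by simp
qed

lemma bdd_above_cmod_cspec: "bdd_above (cmod ` cspec (X :: real^'n^'n))"
proof -
  have "cmod \<mu> \<le> (\<Sum>i\<in>UNIV. \<Sum>j\<in>UNIV. \<bar>X $ i $ j\<bar>)" if "\<mu> \<in> cspec X" for \<mu>
  proof -
    from that obtain v :: "complex^'n" where "v \<noteq> 0"
      and ev: "(\<chi> i j. complex_of_real (X $ i $ j)) *v v = \<mu> *s v"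
      unfolding cspec_def by blast
    define m where "m = Max (range (\<lambda>j. cmod (v $ j)))"
    have "m \<in> range (\<lambda>j. cmod (v $ j))"
      unfolding m_def by (rule Max_in) auto
    then obtain i where mi: "cmod (v $ i) = m" by auto
    have m_ge: "cmod (v $ j) \<le> m" for j
      unfolding m_def by (rule Max_ge) auto
    have "m > 0"
    proof (rule ccontr)
      assume "\<not> m > 0"
      then have "v $ j = 0" for j
        using m_ge[of j] by (metis norm_le_zero_iff order_trans not_less)
      with \<open>v \<noteq> 0\<close> show False by (simp add: vec_eq_iff)
    qed
    have "\<mu> * v $ i = (\<Sum>j\<in>UNIV. complex_of_real (X $ i $ j) * v $ j)"
      using ev by (simp add: vec_eq_iff matrix_vector_mult_def)
    then have "cmod \<mu> * m = cmod (\<Sum>j\<in>UNIV. complex_of_real (X $ i $ j) * v $ j)"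
      using mi by (metis norm_mult)
    also have "\<dots> \<le> (\<Sum>j\<in>UNIV. \<bar>X $ i $ j\<bar> * m)"
      by (rule order_trans[OF norm_sum sum_mono]) (simp add: norm_mult m_ge mult_left_mono)
    also have "\<dots> = (\<Sum>j\<in>UNIV. \<bar>X $ i $ j\<bar>) * m"
      by (simp add: sum_distrib_right)
    finally have "cmod \<mu> \<le> (\<Sum>j\<in>UNIV. \<bar>X $ i $ j\<bar>)"
      using \<open>m > 0\<close> by simp
    also have "\<dots> \<le> (\<Sum>i\<in>UNIV. \<Sum>j\<in>UNIV. \<bar>X $ i $ j\<bar>)"
      by (rule member_le_sum) (auto intro: sum_nonneg)
    finally show ?thesis .
  qed
  then show ?thesis by (auto simp: bdd_above_def)
qed

lemma real_eigenvalue_in_cspec: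
  fixes X :: "real^'n^'n"
  assumes "z \<noteq> 0" and "X *v z = e *\<^sub>R z"
  shows "complex_of_real e \<in> cspec X"
proof -
  define v :: "complex^'n" where "v = (\<chi> i. complex_of_real (z $ i))"
  have "(\<Sum>j\<in>UNIV. complex_of_real (X $ i $ j) * complex_of_real (z $ j))
      = complex_of_real e * complex_of_real (z $ i)" for i
    using arg_cong[OF assms(2), of "\<lambda>w. complex_of_real (w $ i)"]
    by (simp add: matrix_vector_mult_def)
  then have "(\<chi> i j. complex_of_real (X $ i $ j)) *v v = complex_of_real e *s v"
    by (simp add: vec_eq_iff matrix_vector_mult_def v_def)
  moreover have "v \<noteq> 0"
    using assms(1) by (auto simp: v_def vec_eq_iff)
  ultimately show ?thesis
    unfolding cspec_def by blast
qed

text \<open>The real and imaginary parts \<open>a, b\<close> of a complex eigenvector satisfy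
  \<open>Xa = Re \<mu> a - Im \<mu> b\<close> and \<open>Xb = Re \<mu> b + Im \<mu> a\<close>; symmetry of \<open>X\<close> then forces
  \<open>Im \<mu> (|a|\<^sup>2 + |b|\<^sup>2) = 0\<close>.\<close>
lemma symmetric_mat_cspec_real:
  fixes X :: "real^'n^'n"
  assumes sym: "symmetric_mat X" and "\<mu> \<in> cspec X"
  shows "Im \<mu> = 0 \<and> (\<exists>z. z \<noteq> 0 \<and> X *v z = Re \<mu> *\<^sub>R z)"
proof -
  from assms(2) obtain v :: "complex^'n" where "v \<noteq> 0"
    and ev: "(\<chi> i j. complex_of_real (X $ i $ j)) *v v = \<mu> *s v"
    unfolding cspec_def by blast
  define a :: "real^'n" where "a = (\<chi> i. Re (v $ i))"
  define b :: "real^'n" where "b = (\<chi> i. Im (v $ i))"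
  have row: "(\<Sum>j\<in>UNIV. complex_of_real (X $ i $ j) * v $ j) = \<mu> * v $ i" for i
    using ev by (simp add: vec_eq_iff matrix_vector_mult_def)
  have Xa: "X *v a = Re \<mu> *\<^sub>R a - Im \<mu> *\<^sub>R b"
    using arg_cong[OF row, of Re]
    by (simp add: vec_eq_iff matrix_vector_mult_def a_def b_def Re_sum)
  have Xb: "X *v b = Re \<mu> *\<^sub>R b + Im \<mu> *\<^sub>R a"
    using arg_cong[OF row, of Im]
    by (simp add: vec_eq_iff matrix_vector_mult_def a_def b_def Im_sum algebra_simps)
  have "a \<noteq> 0 \<or> b \<noteq> 0"
    using \<open>v \<noteq> 0\<close> by (auto simp: a_def b_def vec_eq_iff complex_eq_iff)
  then have "a \<bullet> a + b \<bullet> b > 0"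
    by (metis add_pos_nonneg add_nonneg_pos inner_gt_zero_iff inner_ge_zero)
  moreover have "Im \<mu> * (a \<bullet> a + b \<bullet> b) = 0"
    using symmetric_mat_inner[OF sym, of a b] unfolding Xa Xb
    by (simp add: inner_add_right inner_diff_left inner_diff_right inner_commute[of b a]
        algebra_simps)
  ultimately have "Im \<mu> = 0" by simp
  with Xa Xb \<open>a \<noteq> 0 \<or> b \<noteq> 0\<close> show ?thesis by auto
qed

lemma symmetric_mat_max_norm_square_eigenvector:
  fixes X :: "real^'n^'n"
  assumes sym: "symmetric_mat X"
  obtains u0 M where "u0 \<noteq> 0" and "X *v (X *v u0) = M *\<^sub>R u0" and "0 \<le> M"
    and "\<And>x. (norm (X *v x))\<^sup>2 \<le> M * (norm x)\<^sup>2"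
proof -
  define q where "q = (\<lambda>x::real^'n. (norm (X *v x))\<^sup>2)"
  have "continuous_on (sphere 0 1) q"
    unfolding q_def
    by (intro continuous_on_power continuous_on_norm linear_continuous_on
        matrix_vector_mul_bounded_linear)
  moreover have "sphere (0::real^'n) 1 \<noteq> {}"
    by simp
  ultimately obtain u0 where u0: "u0 \<in> sphere 0 1" and max: "\<And>y. y \<in> sphere 0 1 \<Longrightarrow> q y \<le> q u0"
    using continuous_attains_sup[OF compact_sphere] by metis
  define M where "M = q u0"
  have q_le: "q x \<le> M * (norm x)\<^sup>2" for x
  proof (cases "x = 0")
    case False
    then have "q ((1 / norm x) *\<^sub>R x) \<le> M"
      using max unfolding M_def by simp
    with False show ?thesis
      by (simp add: q_def matrix_vector_mult_scaleR field_simps power2_eq_square)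
  qed (simp add: q_def)
  define P where "P = M *\<^sub>R mat 1 - X ** X"
  have quad_P: "x \<bullet> (P *v x) = M * (norm x)\<^sup>2 - q x" for x
    by (simp add: P_def q_def matrix_vector_mult_diff_rdistrib inner_diff_right
        scaleR_matrix_vector_assoc[symmetric] matrix_vector_mul_assoc[symmetric]
        symmetric_mat_inner[OF sym] power2_norm_eq_inner)
  have "symmetric_mat P"
    using sym by (simp add: symmetric_mat_def P_def transpose_diff matrix_transpose_mul
        transpose_scalar)
  moreover have "0 \<le> x \<bullet> (P *v x)" for x
    using q_le[of x] quad_P[of x] by simp
  moreover have "u0 \<bullet> (P *v u0) = 0"
    using u0 by (simp add: quad_P M_def)
  ultimately have "P *v u0 = 0"
    by (rule psd_quadratic_form_zero_imp_null)
  then have "X *v (X *v u0) = M *\<^sub>R u0"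
    by (simp add: P_def matrix_vector_mult_diff_rdistrib matrix_vector_mul_assoc
        scaleR_matrix_vector_assoc[symmetric])
  moreover have "u0 \<noteq> 0" and "0 \<le> M"
    using u0 by (auto simp: M_def q_def)
  ultimately show ?thesis
    using that q_le unfolding q_def by blast
qed

text \<open>From \<open>X\<^sup>2w = s\<^sup>2w\<close>: either \<open>Xw = -sw\<close>, or \<open>Xw + sw\<close> is an eigenvector for \<open>s\<close>.\<close>
lemma eigenvector_from_square_eigenvector:
  fixes X :: "real^'n^'n"
  assumes "w \<noteq> 0" and XX: "X *v (X *v w) = s\<^sup>2 *\<^sub>R w" and "0 \<le> s"
  obtains e z where "z \<noteq> 0" and "X *v z = e *\<^sub>R z" and "\<bar>e\<bar> = s"
proof (cases "X *v w + s *\<^sub>R w = 0")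
  case True
  then have "X *v w = (- s) *\<^sub>R w"
    by (simp add: eq_neg_iff_add_eq_0)
  with \<open>w \<noteq> 0\<close> \<open>0 \<le> s\<close> show ?thesis by (auto intro: that[of w "- s"])
next
  case False
  have "X *v (X *v w + s *\<^sub>R w) = s *\<^sub>R (X *v w + s *\<^sub>R w)"
    by (simp add: matrix_vector_right_distrib matrix_vector_mult_scaleR XX power2_eq_square
        algebra_simps)
  with False \<open>0 \<le> s\<close> show ?thesis by (auto intro: that)
qed

lemma symmetric_mat_norm_le_spec_rad:
  fixes X :: "real^'n^'n"
  assumes sym: "symmetric_mat X" and rho: "spec_rad X \<le> r"
  shows "norm (X *v u) \<le> r * norm u"
proof -
  obtain u0 M where "u0 \<noteq> 0" and XX: "X *v (X *v u0) = M *\<^sub>R u0" and "0 \<le> M"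
    and M_bound: "\<And>x. (norm (X *v x))\<^sup>2 \<le> M * (norm x)\<^sup>2"
    using symmetric_mat_max_norm_square_eigenvector[OF sym] by blast
  have "X *v (X *v u0) = (sqrt M)\<^sup>2 *\<^sub>R u0"
    using XX \<open>0 \<le> M\<close> by simp
  then obtain e z where "z \<noteq> 0" and "X *v z = e *\<^sub>R z" and e: "\<bar>e\<bar> = sqrt M"
    using eigenvector_from_square_eigenvector[OF \<open>u0 \<noteq> 0\<close> _ real_sqrt_ge_zero[OF \<open>0 \<le> M\<close>]]
    by blast
  have "complex_of_real e \<in> cspec X"
    using \<open>z \<noteq> 0\<close> \<open>X *v z = e *\<^sub>R z\<close> by (rule real_eigenvalue_in_cspec)
  then have "cmod (complex_of_real e) \<le> spec_rad X"
    unfolding spec_rad_def by (intro cSup_upper bdd_above_cmod_cspec imageI)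
  then have "sqrt M \<le> r"
    using rho e by simp
  then have "0 \<le> r"
    using \<open>0 \<le> M\<close> by (meson order_trans real_sqrt_ge_zero)
  have "(norm (X *v u))\<^sup>2 \<le> (sqrt M * norm u)\<^sup>2"
    using M_bound[of u] \<open>0 \<le> M\<close> by (simp add: power_mult_distrib)
  also have "\<dots> \<le> (r * norm u)\<^sup>2"
    using \<open>sqrt M \<le> r\<close> \<open>0 \<le> M\<close> by (intro power_mono mult_right_mono) auto
  finally show ?thesis
    by (rule power2_le_imp_le) (use \<open>0 \<le> r\<close> in simp)
qed

lemma quadratic_form_half_step_bounds:
  fixes X :: "real^'n^'n"
  assumes sym: "symmetric_mat X" and bound: "\<And>v. norm (X *v v) \<le> r * norm v"
  defines "A \<equiv> mat 1 - (1/2) *\<^sub>R X - (1/2) *\<^sub>R (X ** X)"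
  shows "(1 - r/2 - r\<^sup>2/2) * (u \<bullet> u) \<le> u \<bullet> (A *v u)"
    and "u \<bullet> (A *v u) \<le> (1 + r/2) * (u \<bullet> u)"
proof -
  have quad_A: "u \<bullet> (A *v u) = u \<bullet> u - (u \<bullet> (X *v u)) / 2 - (norm (X *v u))\<^sup>2 / 2"
    by (simp add: A_def matrix_vector_mult_diff_rdistrib inner_diff_right quadratic_form_scaleR
        matrix_vector_mul_assoc[symmetric] symmetric_mat_inner[OF sym] power2_norm_eq_inner)
  have "\<bar>u \<bullet> (X *v u)\<bar> \<le> norm u * norm (X *v u)"
    by (rule Cauchy_Schwarz_ineq2)
  also have "\<dots> \<le> norm u * (r * norm u)"
    by (simp add: bound mult_left_mono)
  also have "\<dots> = r * (u \<bullet> u)"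
    by (simp add: dot_square_norm power2_eq_square)
  finally have linear_term: "\<bar>u \<bullet> (X *v u)\<bar> \<le> r * (u \<bullet> u)" .
  have "(norm (X *v u))\<^sup>2 \<le> (r * norm u)\<^sup>2"
    by (rule power_mono[OF bound norm_ge_zero])
  then have square_term: "(norm (X *v u))\<^sup>2 \<le> r\<^sup>2 * (u \<bullet> u)"
    by (simp add: power_mult_distrib power2_norm_eq_inner)
  show "(1 - r/2 - r\<^sup>2/2) * (u \<bullet> u) \<le> u \<bullet> (A *v u)"
    using quad_A linear_term square_term unfolding abs_le_iff by (simp add: algebra_simps)
  have "(1 + r/2) * (u \<bullet> u) = u \<bullet> u + r * (u \<bullet> u) / 2"
    by (simp add: algebra_simps)
  then show "u \<bullet> (A *v u) \<le> (1 + r/2) * (u \<bullet> u)"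
    using quad_A linear_term zero_le_power2[of "norm (X *v u)"] unfolding abs_le_iff by linarith
qed

lemma spectral_approx_eigenvalue_bounds:
  fixes A Y :: "real^'n^'n"
  assumes approx: "spectral_approx eps A (mat 1 - Y)"
    and "u \<noteq> 0" and eigen: "Y *v u = m *\<^sub>R u"
    and lower: "a * (u \<bullet> u) \<le> u \<bullet> (A *v u)" and upper: "u \<bullet> (A *v u) \<le> b * (u \<bullet> u)"
  shows "1 - exp eps * b \<le> m" and "m \<le> 1 - exp (- eps) * a"
proof -
  have quad_IY: "u \<bullet> ((mat 1 - Y) *v u) = (1 - m) * (u \<bullet> u)"
    by (simp add: matrix_vector_mult_diff_rdistrib inner_diff_right eigen algebra_simps)
  have "u \<bullet> u > 0"
    using \<open>u \<noteq> 0\<close> by simp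
  have "(1 - m) * (u \<bullet> u) \<le> exp eps * (u \<bullet> (A *v u))"
    using loewner_ge_quadratic_form[of "exp eps *\<^sub>R A" "mat 1 - Y" u] approx
    by (simp add: spectral_approx_def quadratic_form_scaleR quad_IY)
  also have "\<dots> \<le> (exp eps * b) * (u \<bullet> u)"
    using upper by (simp add: mult.assoc)
  finally show "1 - exp eps * b \<le> m"
    using \<open>u \<bullet> u > 0\<close> by (simp add: mult_le_cancel_right_pos)
  have "(exp (- eps) * a) * (u \<bullet> u) \<le> exp (- eps) * (u \<bullet> (A *v u))"
    using lower by (simp add: mult.assoc)
  also have "\<dots> \<le> (1 - m) * (u \<bullet> u)"
    using loewner_ge_quadratic_form[of "mat 1 - Y" "exp (- eps) *\<^sub>R A" u] approx
    by (simp add: spectral_approx_def quadratic_form_scaleR quad_IY)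
  finally show "m \<le> 1 - exp (- eps) * a"
    using \<open>u \<bullet> u > 0\<close> by (simp add: mult_le_cancel_right_pos)
qed

theorem mainTheorem8:
  fixes X Xt :: "real^'n^'n" and eps lam :: real
  assumes "nonneg_mat X" and "nonneg_mat Xt"
    and "symmetric_mat X" and "symmetric_mat Xt"
    and "loewner_ge (mat 1) X" and "loewner_ge (mat 1) Xt"
    and "spectral_approx eps (mat 1 - (1/2) *\<^sub>R X - (1/2) *\<^sub>R (X ** X)) (mat 1 - Xt)"
    and "spec_rad X \<le> 1 - lam"
  shows "\<forall>\<mu> \<in> cspec Xt. \<mu> \<in> \<real> \<and>
           1 - (1/2) * (3 - lam) * exp eps \<le> Re \<mu> \<and>
           Re \<mu> \<le> 1 - (1/2) * (3 * lam - lam^2) * exp (- eps)"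
proof
  fix \<mu> assume "\<mu> \<in> cspec Xt"
  then obtain z where "Im \<mu> = 0" and "z \<noteq> 0" and eigen: "Xt *v z = Re \<mu> *\<^sub>R z"
    using symmetric_mat_cspec_real[OF assms(4)] by blast
  let ?r = "1 - lam"
  have bound: "norm (X *v v) \<le> ?r * norm v" for v
    using symmetric_mat_norm_le_spec_rad[OF assms(3,8)] .
  note rayleigh = quadratic_form_half_step_bounds[OF assms(3) bound, of z]
  have "exp eps * (1 + ?r/2) = (1/2) * (3 - lam) * exp eps"
    and "exp (- eps) * (1 - ?r/2 - ?r\<^sup>2/2) = (1/2) * (3 * lam - lam^2) * exp (- eps)"
    by (simp_all add: power2_eq_square field_simps)
  with spectral_approx_eigenvalue_bounds[OF assms(7) \<open>z \<noteq> 0\<close> eigen rayleigh] \<open>Im \<mu> = 0\<close>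
  show "\<mu> \<in> \<real> \<and> 1 - (1/2) * (3 - lam) * exp eps \<le> Re \<mu> \<and>
      Re \<mu> \<le> 1 - (1/2) * (3 * lam - lam^2) * exp (- eps)"
    by (simp add: complex_is_Real_iff)
qed

end
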